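(* Let $k\ge1$, $1\le m\le d$, $p\in[1,\infty]$, and let $v$ be an $\mathbb{R}^k$-valued $m$-vector in $\mathbb{R}^d$. Then \[ |v|_{\mathrm{mass},p}=\inf\Big\{\sum_{i=1}^l\|z_i\|_p\,|v_i|:\ v=\sum_{i=1}^lz_i\otimes v_i,\ z_i\in\mathbb{R}^k,\ v_i\text{ simple }m\text{-vectors in }\mathbb{R}^d\Big\}. \]
   Context: An $\mathbb{R}^k$-valued $m$-vector is $v=\sum_iv_i e_i$ with $v_i\in\Lambda_m(\mathbb{R}^d)$; an $(\mathbb{R}^k)^*$-valued $m$-covector is $w=\sum_iw_ie_i^*$ with $w_i\in\Lambda^m(\mathbb{R}^d)$, paired by $\langle w,v\rangle=\sum_i\langle w_i,v_i\rangle$. With $q$ conjugate to $p$ and $\|\cdot\|_p,\|\cdot\|_q$ the $\ell^p,\ell^q$ norms on $\mathbb{R}^k$: $|w|_{\mathrm{com},p}:=\sup\{\|(\langle w_1,\tau\rangle,\dots,\langle w_k,\tau\rangle)\|_q:\tau\text{ simple }m\text{-vector},|\tau|\le1\}$ and $|v|_{\mathrm{mass},p}:=\sup\{\langle w,v\rangle:|w|_{\mathrm{com},p}\le1\}$. $|\cdot|$ is the Euclidean norm on $\Lambda_m(\mathbb{R}^d)$. *)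

theory Defs
  imports Complex_Main "HOL-Library.Extended_Real" "HOL-Combinatorics.Permutations"
begin

text \<open>An m-vector in R^d is represented by its coefficients w.r.t. the
 orthonormal basis e_I (I an m-element subset of {0..<d}, indices increasing).
 An R^k-valued m-vector is a function v :: nat => nat set => real, v i I being the
 I-th coefficient of the i-th component (i < k). Values outside the index range are ignored.\<close>

definition Idx :: "nat \<Rightarrow> nat \<Rightarrow> nat set set" where
  "Idx d m = {I. I \<subseteq> {..<d} \<and> card I = m}"

text \<open>Coefficients of u 0 \<and> ... \<and> u (m-1): the minors det(u_j(i_r)).\<close>
definition wedge :: "nat \<Rightarrow> (nat \<Rightarrow> nat \<Rightarrow> real) \<Rightarrow> nat set \<Rightarrow> real" where
  "wedge m u I = (\<Sum>\<sigma> | \<sigma> permutes {..<m}.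
      of_int (sign \<sigma>) * (\<Prod>r<m. u (\<sigma> r) (sorted_list_of_set I ! r)))"

definition simple_mvec :: "nat \<Rightarrow> nat \<Rightarrow> (nat set \<Rightarrow> real) \<Rightarrow> bool" where
  "simple_mvec d m \<tau> \<longleftrightarrow>
     (\<exists>u::nat \<Rightarrow> nat \<Rightarrow> real. (\<forall>j<m. \<forall>x. x \<ge> d \<longrightarrow> u j x = 0) \<and>
        (\<forall>I\<in>Idx d m. \<tau> I = wedge m u I))"

definition mnorm :: "nat \<Rightarrow> nat \<Rightarrow> (nat set \<Rightarrow> real) \<Rightarrow> real" where
  "mnorm d m \<tau> = sqrt (\<Sum>I\<in>Idx d m. (\<tau> I)\<^sup>2)"

definition lpnorm :: "ereal \<Rightarrow> nat \<Rightarrow> (nat \<Rightarrow> real) \<Rightarrow> real" where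
  "lpnorm p k z = (if p = \<infinity> then Max ((\<lambda>i. \<bar>z i\<bar>) ` {..<k})
     else (\<Sum>i<k. \<bar>z i\<bar> powr real_of_ereal p) powr (1 / real_of_ereal p))"

definition conj_exp :: "ereal \<Rightarrow> ereal" where
  "conj_exp p = (if p = 1 then \<infinity> else if p = \<infinity> then 1
     else ereal (real_of_ereal p / (real_of_ereal p - 1)))"

definition pairing :: "nat \<Rightarrow> nat \<Rightarrow> nat \<Rightarrow> (nat \<Rightarrow> nat set \<Rightarrow> real) \<Rightarrow> (nat \<Rightarrow> nat set \<Rightarrow> real) \<Rightarrow> real" where
  "pairing k d m w v = (\<Sum>i<k. \<Sum>I\<in>Idx d m. w i I * v i I)"

definition com_norm :: "ereal \<Rightarrow> nat \<Rightarrow> nat \<Rightarrow> nat \<Rightarrow> (nat \<Rightarrow> nat set \<Rightarrow> real) \<Rightarrow> real" where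
  "com_norm p k d m w = Sup {lpnorm (conj_exp p) k (\<lambda>i. \<Sum>I\<in>Idx d m. w i I * \<tau> I) | \<tau>.
      simple_mvec d m \<tau> \<and> mnorm d m \<tau> \<le> 1}"

definition mass_norm :: "ereal \<Rightarrow> nat \<Rightarrow> nat \<Rightarrow> nat \<Rightarrow> (nat \<Rightarrow> nat set \<Rightarrow> real) \<Rightarrow> real" where
  "mass_norm p k d m v = Sup {pairing k d m w v | w. com_norm p k d m w \<le> 1}"

end

theory Submission
  imports Defs "HOL-Library.Function_Algebras" "HOL-Analysis.Convex"
begin

text \<open>The infimum \<open>N\<close> over decompositions is a sublinear functional on the space of
  \<open>\<real>\<^sup>k\<close>-valued m-vectors. Applying Hoelder's inequality term by term to a decomposition
  shows that every covector of comass at most 1 is dominated by \<open>N\<close>, so the mass is at most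
  \<open>N\<close>. Conversely, the finite-dimensional Hahn-Banach theorem gives a linear functional dominated
  by \<open>N\<close> that attains \<open>N v\<close>; testing the domination on the products \<open>z \<otimes> \<tau>\<close> with \<open>\<tau>\<close>
  simple and using the duality of \<open>l\<^sup>p\<close> and \<open>l\<^sup>q\<close> shows that its comass is at most 1.\<close>

instantiation "fun" :: (type, real_vector) real_vector
begin
definition scaleR_fun :: "real \<Rightarrow> ('a \<Rightarrow> 'b) \<Rightarrow> 'a \<Rightarrow> 'b" where
  "scaleR_fun c f = (\<lambda>x. c *\<^sub>R f x)"
instance by standard (auto simp: scaleR_fun_def fun_eq_iff algebra_simps)
end

lemma scaleR_fun_apply [simp]: "(c *\<^sub>R f) x = c *\<^sub>R f x"
  by (simp add: scaleR_fun_def)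

lemma sum_fun_apply: "(\<Sum>a\<in>A. f a) x = (\<Sum>a\<in>A. f a x)"
  for f :: "'a \<Rightarrow> 'b \<Rightarrow> 'c::comm_monoid_add"
  by (induction A rule: infinite_finite_induct) simp_all

definition sublinear :: "('a::real_vector \<Rightarrow> real) \<Rightarrow> bool" where
  "sublinear q \<longleftrightarrow>
     (\<forall>x y. q (x + y) \<le> q x + q y) \<and> (\<forall>c x. 0 \<le> c \<longrightarrow> q (c *\<^sub>R x) = c * q x)"

definition linear_on :: "'a::real_vector set \<Rightarrow> ('a \<Rightarrow> real) \<Rightarrow> bool" where
  "linear_on U f \<longleftrightarrow>
     (\<forall>x\<in>U. \<forall>y\<in>U. f (x + y) = f x + f y) \<and> (\<forall>c. \<forall>x\<in>U. f (c *\<^sub>R x) = c * f x)"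

lemma sublinear_zero: "sublinear q \<Longrightarrow> q 0 = 0"
  unfolding sublinear_def by (metis mult_zero_left order_refl scaleR_zero_left)

lemma sublinear_scale_ge:
  assumes q: "sublinear q"
  shows "t * q y \<le> q (t *\<^sub>R y)"
proof (cases "0 \<le> t")
  case True
  then show ?thesis using q by (simp add: sublinear_def)
next
  case False
  have "0 = q (y + - y)" using sublinear_zero[OF q] by simp
  also have "\<dots> \<le> q y + q (- y)" using q unfolding sublinear_def by blast
  finally have "(- t) * (- q y) \<le> (- t) * q (- y)"
    using False by (intro mult_left_mono) auto
  moreover have "q ((- t) *\<^sub>R (- y)) = (- t) * q (- y)"
    using q False unfolding sublinear_def by (meson le_minus_iff linorder_linear neg_0_le_iff_le order.trans)
  ultimately show ?thesis by simp
qed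

lemma linear_on_subset: "linear_on W g \<Longrightarrow> V \<subseteq> W \<Longrightarrow> linear_on V g"
  unfolding linear_on_def by blast

lemma linear_on_zero: "linear_on S g \<Longrightarrow> 0 \<in> S \<Longrightarrow> g 0 = 0"
  unfolding linear_on_def by (metis mult_zero_left scaleR_zero_left)

lemma linear_on_sum:
  assumes g: "linear_on S g" and S: "subspace S" and f: "\<And>a. a \<in> A \<Longrightarrow> f a \<in> S"
  shows "g (\<Sum>a\<in>A. f a) = (\<Sum>a\<in>A. g (f a))"
  using f
proof (induction A rule: infinite_finite_induct)
  case (insert a A)
  then show ?case
    using g subspace_sum[OF S, of A f] by (simp add: linear_on_def)
qed (simp_all add: linear_on_zero[OF g subspace_0[OF S]])

lemma span_insert_subspace:
  assumes "subspace U"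
  shows "span (insert y U) = {u + t *\<^sub>R y |u t. u \<in> U}"
proof -
  have "span (insert y U) = {x. \<exists>t. x - t *\<^sub>R y \<in> U}"
    unfolding span_insert span_eq_iff[THEN iffD2, OF assms] ..
  also have "\<dots> = {u + t *\<^sub>R y |u t. u \<in> U}"
  proof (intro equalityI subsetI)
    fix x assume "x \<in> {x. \<exists>t. x - t *\<^sub>R y \<in> U}"
    then obtain t where "x - t *\<^sub>R y \<in> U" by blast
    moreover have "x = (x - t *\<^sub>R y) + t *\<^sub>R y" by simp
    ultimately show "x \<in> {u + t *\<^sub>R y |u t. u \<in> U}" by blast
  next
    fix x assume "x \<in> {u + t *\<^sub>R y |u t. u \<in> U}"
    then obtain u t where "u \<in> U" "x = u + t *\<^sub>R y" by blast
    then show "x \<in> {x. \<exists>t. x - t *\<^sub>R y \<in> U}" by (intro CollectI exI[of _ t]) simp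
  qed
  finally show ?thesis .
qed

lemma linear_extension_along:
  assumes U: "subspace U" and f: "linear_on U f" and y: "y \<notin> U"
  shows "\<exists>g. linear_on (span (insert y U)) g \<and> (\<forall>u\<in>U. \<forall>t. g (u + t *\<^sub>R y) = f u + t * c)"
proof -
  have unique: "t = t'" if "x - t *\<^sub>R y \<in> U" "x - t' *\<^sub>R y \<in> U" for x t t'
  proof (rule ccontr)
    assume "t \<noteq> t'"
    have "(1 / (t' - t)) *\<^sub>R ((x - t *\<^sub>R y) - (x - t' *\<^sub>R y)) \<in> U"
      by (rule subspace_scale[OF U subspace_diff[OF U that]])
    also have "(1 / (t' - t)) *\<^sub>R ((x - t *\<^sub>R y) - (x - t' *\<^sub>R y)) = y"
      using \<open>t \<noteq> t'\<close> by (simp add: algebra_simps flip: scaleR_diff_left)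
    finally show False using y by simp
  qed
  define T where "T x = (THE t. x - t *\<^sub>R y \<in> U)" for x
  define g where "g x = f (x - T x *\<^sub>R y) + T x * c" for x
  have g_eq: "g (u + t *\<^sub>R y) = f u + t * c" if "u \<in> U" for u t
  proof -
    have "T (u + t *\<^sub>R y) = t"
      unfolding T_def using that unique by (intro the_equality) auto
    then show ?thesis by (simp add: g_def)
  qed
  have "linear_on (span (insert y U)) g"
    unfolding linear_on_def span_insert_subspace[OF U]
  proof (intro conjI ballI allI)
    fix x1 x2 assume "x1 \<in> {u + t *\<^sub>R y |u t. u \<in> U}" "x2 \<in> {u + t *\<^sub>R y |u t. u \<in> U}"
    then obtain u1 t1 u2 t2 where u: "u1 \<in> U" "u2 \<in> U"
      and x: "x1 = u1 + t1 *\<^sub>R y" "x2 = u2 + t2 *\<^sub>R y" by blast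
    have "x1 + x2 = (u1 + u2) + (t1 + t2) *\<^sub>R y" unfolding x by (simp add: algebra_simps)
    then have "g (x1 + x2) = f (u1 + u2) + (t1 + t2) * c" using g_eq[OF subspace_add[OF U u]] by simp
    then show "g (x1 + x2) = g x1 + g x2"
      unfolding x using f u g_eq by (simp add: linear_on_def algebra_simps)
  next
    fix a x assume "x \<in> {u + t *\<^sub>R y |u t. u \<in> U}"
    then obtain u t where u: "u \<in> U" and x: "x = u + t *\<^sub>R y" by blast
    have "a *\<^sub>R x = a *\<^sub>R u + (a * t) *\<^sub>R y" unfolding x by (simp add: algebra_simps)
    then have "g (a *\<^sub>R x) = f (a *\<^sub>R u) + (a * t) * c" using g_eq[OF subspace_scale[OF U u]] by simp
    then show "g (a *\<^sub>R x) = a * g x"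
      unfolding x using f u g_eq by (simp add: linear_on_def algebra_simps)
  qed
  then show ?thesis using g_eq by blast
qed

lemma dominated_extension_step:
  fixes q f :: "'a::real_vector \<Rightarrow> real"
  assumes q: "sublinear q" and U: "subspace U" and f: "linear_on U f"
    and c: "\<And>u t. u \<in> U \<Longrightarrow> f u + t * c \<le> q (u + t *\<^sub>R y)"
  shows "\<exists>g. linear_on (span (insert y U)) g \<and> (\<forall>u\<in>U. g u = f u) \<and> g y = c
     \<and> (\<forall>x\<in>span (insert y U). g x \<le> q x)"
proof (cases "y \<in> U")
  case True
  have span_eq: "span (insert y U) = U" using True U by (metis span_eq_iff span_redundant)
  have f_neg: "f (- y) = - f y"
    using f True unfolding linear_on_def by (metis scaleR_minus1_left mult_minus1)
  have "f (- y) + 1 * c \<le> q 0" "f y + (- 1) * c \<le> q 0"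
    using c[of "- y" 1] c[of y "- 1"] True U by (simp_all add: subspace_neg)
  then have "f y = c" using f_neg sublinear_zero[OF q] by simp
  moreover have "f u \<le> q u" if "u \<in> U" for u using c[OF that, of 0] by simp
  ultimately show ?thesis using f span_eq by (intro exI[of _ f]) auto
next
  case False
  then obtain g where g: "linear_on (span (insert y U)) g"
    and g_eq: "\<And>u t. u \<in> U \<Longrightarrow> g (u + t *\<^sub>R y) = f u + t * c"
    using linear_extension_along[OF U f] by blast
  have "g u = f u" if "u \<in> U" for u using g_eq[OF that, of 0] by simp
  moreover have "g y = c" using g_eq[OF subspace_0[OF U], of 1] linear_on_zero[OF f subspace_0[OF U]]
    by simp
  moreover have "g x \<le> q x" if "x \<in> span (insert y U)" for x
    using that g_eq c unfolding span_insert_subspace[OF U] by auto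
  ultimately show ?thesis using g by blast
qed

text \<open>Rescaling by \<open>1 / \<bar>t\<bar>\<close> reduces the claim to \<open>t = \<plusminus>1\<close>, which are the hypotheses.\<close>

lemma dominated_extension_value:
  fixes q f :: "'a::real_vector \<Rightarrow> real"
  assumes q: "sublinear q" and U: "subspace U" and f: "linear_on U f"
    and fq: "\<And>u. u \<in> U \<Longrightarrow> f u \<le> q u"
    and lower: "\<And>u. u \<in> U \<Longrightarrow> f u - q (u - y) \<le> c"
    and upper: "\<And>u. u \<in> U \<Longrightarrow> c \<le> q (u + y) - f u"
    and u: "u \<in> U"
  shows "f u + t * c \<le> q (u + t *\<^sub>R y)"
proof -
  have q_hom: "q (s *\<^sub>R a) = s * q a" if "0 \<le> s" for s a using q that by (simp add: sublinear_def)
  have f_hom: "f (s *\<^sub>R u) = s * f u" for s using f u by (simp add: linear_on_def)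
  consider "t = 0" | "t > 0" | "t < 0" by linarith
  then show ?thesis
  proof cases
    case 1
    then show ?thesis using fq u by simp
  next
    case 2
    have "c \<le> q ((1/t) *\<^sub>R u + y) - f ((1/t) *\<^sub>R u)"
      by (rule upper[OF subspace_scale[OF U u]])
    also have "(1/t) *\<^sub>R u + y = (1/t) *\<^sub>R (u + t *\<^sub>R y)" using 2 by (simp add: algebra_simps)
    finally have "c \<le> (1/t) * (q (u + t *\<^sub>R y) - f u)"
      using q_hom[of "1/t"] f_hom 2 by (simp add: right_diff_distrib)
    then show ?thesis using 2 by (simp add: field_simps)
  next
    case 3
    define s where "s = - t"
    have s: "0 < s" using 3 by (simp add: s_def)
    have "f ((1/s) *\<^sub>R u) - q ((1/s) *\<^sub>R u - y) \<le> c"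
      by (rule lower[OF subspace_scale[OF U u]])
    also have "(1/s) *\<^sub>R u - y = (1/s) *\<^sub>R (u + t *\<^sub>R y)"
      using s by (simp add: s_def algebra_simps)
    finally have "(1/s) * (f u - q (u + t *\<^sub>R y)) \<le> c"
      using q_hom[of "1/s"] f_hom s by (simp add: right_diff_distrib)
    then show ?thesis using s by (simp add: s_def field_simps)
  qed
qed

lemma dominated_extension_value_exists:
  fixes q f :: "'a::real_vector \<Rightarrow> real"
  assumes q: "sublinear q" and U: "subspace U" and f: "linear_on U f"
    and fq: "\<And>u. u \<in> U \<Longrightarrow> f u \<le> q u"
  shows "\<exists>c. \<forall>u\<in>U. \<forall>t. f u + t * c \<le> q (u + t *\<^sub>R y)"
proof -
  have separated: "f u - q (u - y) \<le> q (u' + y) - f u'" if "u \<in> U" "u' \<in> U" for u u'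
  proof -
    have "f u + f u' = f (u + u')" using f that by (simp add: linear_on_def)
    also have "\<dots> \<le> q (u + u')" using fq subspace_add[OF U that] by simp
    also have "u + u' = (u - y) + (u' + y)" by simp
    also have "q \<dots> \<le> q (u - y) + q (u' + y)" using q by (simp only: sublinear_def)
    finally show ?thesis by simp
  qed
  define c where "c = (SUP u\<in>U. f u - q (u - y))"
  have bdd: "bdd_above ((\<lambda>u. f u - q (u - y)) ` U)"
    by (rule bdd_aboveI2) (rule separated[OF _ subspace_0[OF U]])
  have "f u - q (u - y) \<le> c" if "u \<in> U" for u
    unfolding c_def using bdd that by (rule cSUP_upper2) simp
  moreover have "c \<le> q (u + y) - f u" if "u \<in> U" for u
    unfolding c_def using separated that subspace_0[OF U] by (intro cSUP_least) auto
  ultimately show ?thesis using dominated_extension_value[OF q U f fq] by blast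
qed

lemma Hahn_Banach_finite:
  fixes q f :: "'a::real_vector \<Rightarrow> real"
  assumes q: "sublinear q" and U: "subspace U" and f: "linear_on U f"
    and fq: "\<And>u. u \<in> U \<Longrightarrow> f u \<le> q u" and B: "finite B"
  shows "\<exists>g. linear_on (span (U \<union> B)) g \<and> (\<forall>u\<in>U. g u = f u)
     \<and> (\<forall>x\<in>span (U \<union> B). g x \<le> q x)"
  using B
proof (induction B rule: finite_induct)
  case empty
  show ?case
    unfolding Un_empty_right span_eq_iff[THEN iffD2, OF U] using f fq by (intro exI[of _ f]) simp
next
  case (insert b B)
  define W where "W = span (U \<union> B)"
  obtain g1 where g1: "linear_on W g1" "\<forall>u\<in>U. g1 u = f u" "\<forall>x\<in>W. g1 x \<le> q x"
    using insert.IH unfolding W_def by blast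
  have W: "subspace W" by (simp add: W_def)
  obtain c where "\<forall>u\<in>W. \<forall>t. g1 u + t * c \<le> q (u + t *\<^sub>R b)"
    using dominated_extension_value_exists[OF q W g1(1)] g1(3) by blast
  then obtain g where g: "linear_on (span (insert b W)) g" "\<forall>u\<in>W. g u = g1 u"
    "\<forall>x\<in>span (insert b W). g x \<le> q x"
    using dominated_extension_step[OF q W g1(1)] by blast
  have sub: "span (U \<union> insert b B) \<subseteq> span (insert b W)"
    unfolding W_def by (intro span_mono) (auto intro: span_base)
  have "U \<subseteq> W" unfolding W_def by (auto intro: span_base)
  then show ?case
    using linear_on_subset[OF g(1) sub] g(2,3) g1(2) sub by (intro exI[of _ g]) auto
qed

lemma Hahn_Banach_norming:
  fixes q :: "'a::real_vector \<Rightarrow> real"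
  assumes q: "sublinear q" and B: "finite B" and y: "y \<in> span B"
  shows "\<exists>g. linear_on (span B) g \<and> g y = q y \<and> (\<forall>x\<in>span B. g x \<le> q x)"
proof -
  have "\<exists>g0. linear_on (span (insert y {0})) g0 \<and> (\<forall>u\<in>{0}. g0 u = 0) \<and> g0 y = q y
      \<and> (\<forall>x\<in>span (insert y {0}). g0 x \<le> q x)"
    by (rule dominated_extension_step[OF q subspace_single_0])
      (use sublinear_scale_ge[OF q] in \<open>auto simp: linear_on_def\<close>)
  moreover have "span (insert y {0}) = span {y}" by (metis insert_commute span_insert_0)
  ultimately obtain g0 where g0: "linear_on (span {y}) g0" "g0 y = q y" "\<forall>x\<in>span {y}. g0 x \<le> q x"
    by auto
  obtain g where g: "linear_on (span (span {y} \<union> B)) g" "\<forall>u\<in>span {y}. g u = g0 u"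
    "\<forall>x\<in>span (span {y} \<union> B). g x \<le> q x"
    using Hahn_Banach_finite[OF q subspace_span g0(1)] g0(3) B by blast
  have "span {y} \<subseteq> span B" using y by (simp add: span_minimal)
  moreover have "B \<subseteq> span (span {y} \<union> B)" by (meson le_supE span_superset)
  ultimately have "span (span {y} \<union> B) = span B" by (simp add: span_eq span_superset)
  then show ?thesis using g g0(2) span_superset[of "{y}"] by (intro exI[of _ g]) auto
qed

lemma ereal_ge_1_cases:
  assumes "1 \<le> (p::ereal)"
  obtains "p = \<infinity>" | "p = 1" | r where "p = ereal r" "1 < r"
  using assms by (cases p) (auto simp: le_less)

lemma lpnorm_infinity: "lpnorm \<infinity> k z = Max ((\<lambda>i. \<bar>z i\<bar>) ` {..<k})"
  by (simp add: lpnorm_def)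

lemma lpnorm_ereal: "lpnorm (ereal r) k z = (\<Sum>i<k. \<bar>z i\<bar> powr r) powr (1 / r)"
  by (simp add: lpnorm_def)

lemma lpnorm_one: "lpnorm 1 k z = (\<Sum>i<k. \<bar>z i\<bar>)"
  by (simp add: lpnorm_def sum_nonneg)

lemma conj_exp_infinity: "conj_exp \<infinity> = 1"
  by (simp add: conj_exp_def)

lemma conj_exp_one: "conj_exp 1 = \<infinity>"
  by (simp add: conj_exp_def)

lemma conj_exp_ereal: "1 < r \<Longrightarrow> conj_exp (ereal r) = ereal (r / (r - 1))"
  by (simp add: conj_exp_def)

lemma conj_exp_ge_1:
  assumes "1 \<le> p"
  shows "1 \<le> conj_exp p"
  using assms
proof (cases rule: ereal_ge_1_cases)
  case (3 r)
  then show ?thesis by (simp add: conj_exp_ereal le_divide_eq)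
qed (simp_all add: conj_exp_infinity conj_exp_one)

lemma lpnorm_nonneg: "0 < k \<Longrightarrow> 0 \<le> lpnorm p k z"
  unfolding lpnorm_def by (auto intro: order.trans[OF _ Max_ge[of _ "\<bar>z 0\<bar>"]])

lemma Holder_inequality_sum:
  fixes z a :: "'i \<Rightarrow> real"
  assumes r: "1 < r" and s: "s = r / (r - 1)"
  shows "(\<Sum>i\<in>A. z i * a i) \<le> (\<Sum>i\<in>A. \<bar>z i\<bar> powr r) powr (1/r) * (\<Sum>i\<in>A. \<bar>a i\<bar> powr s) powr (1/s)"
proof -
  define Z where "Z = (\<Sum>i\<in>A. \<bar>z i\<bar> powr r) powr (1/r)"
  define B where "B = (\<Sum>i\<in>A. \<bar>a i\<bar> powr s) powr (1/s)"
  have s1: "1 < s" using r s by (simp add: less_divide_eq)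
  have rs: "1/r + 1/s = 1" unfolding s using r by (simp add: field_simps)
  have "(\<Sum>i\<in>A. z i * a i) \<le> (\<Sum>i\<in>A. \<bar>z i\<bar> * \<bar>a i\<bar>)"
    by (intro sum_mono) (simp flip: abs_mult)
  also have "\<dots> \<le> Z * B"
  proof (cases "Z = 0 \<or> B = 0")
    case True
    then have "\<forall>i\<in>A. z i = 0 \<or> a i = 0 \<or> infinite A" using r s1
      by (auto simp: Z_def B_def sum_nonneg_eq_0_iff)
    then have "(\<Sum>i\<in>A. \<bar>z i\<bar> * \<bar>a i\<bar>) = 0" by (cases "finite A") (auto intro!: sum.neutral)
    then show ?thesis by (simp add: Z_def B_def)
  next
    case False
    then have ZB: "0 < Z" "0 < B" by (auto simp: Z_def B_def)
    have Zr: "Z powr r = (\<Sum>i\<in>A. \<bar>z i\<bar> powr r)" and Bs: "B powr s = (\<Sum>i\<in>A. \<bar>a i\<bar> powr s)"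
      using r s1 by (simp_all add: Z_def B_def powr_powr sum_nonneg)
    have "(\<Sum>i\<in>A. (\<bar>z i\<bar> / Z) * (\<bar>a i\<bar> / B))
        \<le> (\<Sum>i\<in>A. (\<bar>z i\<bar> / Z) powr r / r + (\<bar>a i\<bar> / B) powr s / s)"
      using ZB by (intro sum_mono Youngs_inequality[OF r s1 rs]) simp_all
    also have "\<dots> = (\<Sum>i\<in>A. \<bar>z i\<bar> powr r) / Z powr r / r + (\<Sum>i\<in>A. \<bar>a i\<bar> powr s) / B powr s / s"
      using ZB by (simp add: powr_divide sum.distrib sum_divide_distrib)
    also have "\<dots> = 1"
      using ZB rs by (simp flip: Zr Bs)
    finally have "(\<Sum>i\<in>A. \<bar>z i\<bar> * \<bar>a i\<bar>) / (Z * B) \<le> 1"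
      by (simp add: sum_divide_distrib)
    then show ?thesis using ZB by (simp add: divide_le_eq)
  qed
  finally show ?thesis by (simp add: Z_def B_def)
qed

lemma sum_mult_le_Max_abs:
  fixes z a :: "nat \<Rightarrow> real"
  shows "(\<Sum>i<k. z i * a i) \<le> Max ((\<lambda>i. \<bar>z i\<bar>) ` {..<k}) * (\<Sum>i<k. \<bar>a i\<bar>)"
  unfolding sum_distrib_left
proof (rule sum_mono)
  fix i assume "i \<in> {..<k}"
  then have "\<bar>z i\<bar> \<le> Max ((\<lambda>i. \<bar>z i\<bar>) ` {..<k})" by (intro Max_ge) auto
  then have "\<bar>z i\<bar> * \<bar>a i\<bar> \<le> Max ((\<lambda>i. \<bar>z i\<bar>) ` {..<k}) * \<bar>a i\<bar>"
    by (rule mult_right_mono) simp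
  then show "z i * a i \<le> Max ((\<lambda>i. \<bar>z i\<bar>) ` {..<k}) * \<bar>a i\<bar>"
    by (metis abs_ge_self abs_mult order_trans)
qed

lemma lpnorm_Holder:
  assumes "1 \<le> p"
  shows "(\<Sum>i<k. z i * a i) \<le> lpnorm p k z * lpnorm (conj_exp p) k a"
  using assms
proof (cases rule: ereal_ge_1_cases)
  case 1
  show ?thesis
    unfolding 1 lpnorm_infinity conj_exp_infinity lpnorm_one by (rule sum_mult_le_Max_abs)
next
  case 2
  have "(\<Sum>i<k. z i * a i) = (\<Sum>i<k. a i * z i)" by (simp add: mult.commute)
  also have "\<dots> \<le> Max ((\<lambda>i. \<bar>a i\<bar>) ` {..<k}) * (\<Sum>i<k. \<bar>z i\<bar>)"
    by (rule sum_mult_le_Max_abs)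
  finally show ?thesis
    unfolding 2 lpnorm_infinity conj_exp_one lpnorm_one by (simp only: mult.commute)
next
  case (3 r)
  then show ?thesis
    using Holder_inequality_sum[of r "r / (r - 1)"] by (simp add: lpnorm_ereal conj_exp_ereal)
qed

lemma conj_powr_sum_le_1:
  fixes a :: "'i \<Rightarrow> real"
  assumes r: "1 < r" and s: "s = r / (r - 1)"
    and H: "\<And>z. (\<Sum>i\<in>A. z i * a i) \<le> (\<Sum>i\<in>A. \<bar>z i\<bar> powr r) powr (1/r)"
  shows "(\<Sum>i\<in>A. \<bar>a i\<bar> powr s) powr (1/s) \<le> 1"
proof -
  define S where "S = (\<Sum>i\<in>A. \<bar>a i\<bar> powr s)"
  have s1: "1 < s" using r s by (simp add: less_divide_eq)
  have sr: "(s - 1) * r = s" using r s by (simp add: field_simps)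
  \<comment> \<open>the equality case of Hoelder's inequality\<close>
  define z where "z i = sgn (a i) * \<bar>a i\<bar> powr (s - 1)" for i
  have za: "z i * a i = \<bar>a i\<bar> powr s" for i
  proof (cases "a i = 0")
    case False
    then have "z i * a i = \<bar>a i\<bar> * \<bar>a i\<bar> powr (s - 1)"
      by (simp add: z_def sgn_if)
    also have "\<dots> = \<bar>a i\<bar> powr (1 + (s - 1))" using False by (simp add: powr_mult_base)
    finally show ?thesis by simp
  qed (use s1 in \<open>simp add: z_def\<close>)
  have zr: "\<bar>z i\<bar> powr r = \<bar>a i\<bar> powr s" for i
    using sr s1 by (cases "a i = 0") (simp_all add: z_def abs_mult powr_powr)
  have "S = (\<Sum>i\<in>A. z i * a i)" by (simp add: S_def za)
  also have "\<dots> \<le> S powr (1 / r)" using H[of z] by (simp add: zr S_def)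
  finally have "S \<le> S powr (1/r)" .
  then have "S \<le> 1"
    using r powr_less_mono[of "1/r" 1 S] by (cases "S \<le> 1") auto
  then show ?thesis using s1 by (simp add: S_def powr_le1 sum_nonneg)
qed

lemma lpnorm_conj_le_1:
  fixes a :: "nat \<Rightarrow> real"
  assumes p: "1 \<le> p" and k: "0 < k" and H: "\<And>z. (\<Sum>i<k. z i * a i) \<le> lpnorm p k z"
  shows "lpnorm (conj_exp p) k a \<le> 1"
  using p
proof (cases rule: ereal_ge_1_cases)
  case 1
  have "(\<Sum>i<k. \<bar>a i\<bar>) = (\<Sum>i<k. sgn (a i) * a i)" by (intro sum.cong) (auto simp: sgn_if)
  also have "\<dots> \<le> lpnorm p k (\<lambda>i. sgn (a i))" by (rule H)
  also have "\<dots> \<le> 1"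
    unfolding 1 lpnorm_infinity using k by (intro Max.boundedI) (auto simp: abs_sgn_eq)
  finally show ?thesis using 1 by (simp add: conj_exp_infinity lpnorm_one)
next
  case 2
  have "Max ((\<lambda>i. \<bar>a i\<bar>) ` {..<k}) \<in> (\<lambda>i. \<bar>a i\<bar>) ` {..<k}"
    using k by (intro Max_in) auto
  then obtain i0 where i0: "i0 < k" "Max ((\<lambda>i. \<bar>a i\<bar>) ` {..<k}) = \<bar>a i0\<bar>"
    by auto
  define z where "z i = (if i = i0 then sgn (a i0) else 0)" for i
  have "z i * a i = (if i = i0 then \<bar>a i0\<bar> else 0)" for i by (simp add: z_def sgn_if)
  then have "\<bar>a i0\<bar> = (\<Sum>i<k. z i * a i)" using i0 by simp
  also have "\<dots> \<le> (\<Sum>i<k. \<bar>z i\<bar>)" using H 2 by (simp add: lpnorm_one)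
  also have "\<dots> \<le> 1"
  proof -
    have "\<bar>z i\<bar> = (if i = i0 then \<bar>sgn (a i0)\<bar> else 0)" for i by (simp add: z_def)
    then show ?thesis using i0 by (simp add: abs_sgn_eq)
  qed
  finally show ?thesis using 2 i0 by (simp add: conj_exp_one lpnorm_infinity)
next
  case (3 r)
  then show ?thesis
    using conj_powr_sum_le_1[where s = "r / (r - 1)" and A = "{..<k}" and a = a] H
    unfolding lpnorm_ereal conj_exp_ereal[OF \<open>1 < r\<close>] \<open>p = ereal r\<close> by blast
qed

lemma lpnorm_le_card_mult:
  assumes r: "1 \<le> r" and k: "0 < k" and M: "\<And>i. i < k \<Longrightarrow> \<bar>a i\<bar> \<le> M"
  shows "lpnorm r k a \<le> real k * M"
proof -
  have M0: "0 \<le> M" using M[OF k] by linarith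
  have "lpnorm \<infinity> k a \<le> M"
    unfolding lpnorm_infinity using k M by (intro Max.boundedI) auto
  moreover have "lpnorm r k a \<le> real k * M" if "r = ereal s" "1 \<le> s" for s
  proof -
    have "(\<Sum>i<k. \<bar>a i\<bar> powr s) powr (1/s) \<le> (\<Sum>i<k. M powr s) powr (1/s)"
      using M that by (intro powr_mono2 sum_mono) (auto simp: sum_nonneg)
    also have "\<dots> = real k powr (1/s) * M" using that M0 by (simp add: powr_mult powr_powr)
    also have "\<dots> \<le> real k powr 1 * M" using that k M0 by (intro mult_right_mono powr_mono) auto
    finally show ?thesis using that by (simp add: lpnorm_ereal)
  qed
  moreover have "M \<le> real k * M" using k M0 by (simp add: mult_le_cancel_right1)
  ultimately show ?thesis using r by (cases r) fastforce+
qed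

lemma finite_Idx: "finite (Idx d m)"
  by (rule finite_subset[of _ "Pow {..<d}"]) (auto simp: Idx_def)

lemma sorted_list_of_set_nth_mem: "finite I \<Longrightarrow> j < card I \<Longrightarrow> sorted_list_of_set I ! j \<in> I"
  by (metis length_sorted_list_of_set nth_mem set_sorted_list_of_set)

lemma wedge_scale_first:
  assumes m: "1 \<le> m"
  shows "wedge m (u(0 := (\<lambda>x. c * u 0 x))) I = c * wedge m u I"
  unfolding wedge_def sum_distrib_left
proof (rule sum.cong[OF refl])
  fix \<sigma> assume "\<sigma> \<in> {\<sigma>. \<sigma> permutes {..<m}}"
  then have \<sigma>: "\<sigma> permutes {..<m}" by simp
  let ?L = "sorted_list_of_set I"
  have "(\<Prod>r<m. (u(0 := (\<lambda>x. c * u 0 x))) (\<sigma> r) (?L ! r))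
      = (\<Prod>r<m. (if r = inv \<sigma> 0 then c else 1) * u (\<sigma> r) (?L ! r))"
  proof (rule prod.cong[OF refl])
    fix r
    have "(r = inv \<sigma> 0) = (\<sigma> r = 0)" using permutes_inv_eq[OF \<sigma>] by metis
    then show "(u(0 := (\<lambda>x. c * u 0 x))) (\<sigma> r) (?L ! r)
        = (if r = inv \<sigma> 0 then c else 1) * u (\<sigma> r) (?L ! r)" by auto
  qed
  also have "\<dots> = (\<Prod>r<m. if r = inv \<sigma> 0 then c else 1) * (\<Prod>r<m. u (\<sigma> r) (?L ! r))"
    by (rule prod.distrib)
  also have "(\<Prod>r<m. if r = inv \<sigma> 0 then c else 1) = c"
    using permutes_in_image[OF permutes_inv[OF \<sigma>], of 0] m by simp
  finally show "of_int (sign \<sigma>) * (\<Prod>r<m. (u(0 := (\<lambda>x. c * u 0 x))) (\<sigma> r) (?L ! r))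
      = c * (of_int (sign \<sigma>) * (\<Prod>r<m. u (\<sigma> r) (?L ! r)))" by simp
qed

lemma simple_mvec_scale:
  assumes m: "1 \<le> m" and \<tau>: "simple_mvec d m \<tau>"
  shows "simple_mvec d m (\<lambda>I. c * \<tau> I)"
proof -
  obtain u where u: "\<forall>j<m. \<forall>x. x \<ge> d \<longrightarrow> u j x = 0" "\<forall>I\<in>Idx d m. \<tau> I = wedge m u I"
    using \<tau> by (auto simp: simple_mvec_def)
  then show ?thesis
    unfolding simple_mvec_def using wedge_scale_first[OF m]
    by (intro exI[of _ "u(0 := (\<lambda>x. c * u 0 x))"]) auto
qed

lemma simple_mvec_zero:
  assumes "1 \<le> m"
  shows "simple_mvec d m (\<lambda>_. 0)"
  unfolding simple_mvec_def wedge_def using assms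
  by (intro exI[of _ "\<lambda>_ _. 0"]) (auto intro!: sum.neutral)

definition coordinate_frame :: "nat set \<Rightarrow> nat \<Rightarrow> nat \<Rightarrow> real" where
  "coordinate_frame I r x = (if x = sorted_list_of_set I ! r then 1 else 0)"

lemma wedge_coordinate_frame_self:
  assumes I: "I \<in> Idx d m"
  shows "wedge m (coordinate_frame I) I = 1"
proof -
  let ?L = "sorted_list_of_set I"
  have lenL: "length ?L = m" using I by (simp add: Idx_def)
  have "of_int (sign \<sigma>) * (\<Prod>r<m. coordinate_frame I (\<sigma> r) (?L ! r)) = (if \<sigma> = id then 1 else 0)"
    if \<sigma>: "\<sigma> permutes {..<m}" for \<sigma>
  proof (cases "\<sigma> = id")
    case False
    then obtain r where r: "\<sigma> r \<noteq> r" by (metis eq_id_iff)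
    then have "r < m" "\<sigma> r < m" using \<sigma> permutes_in_image[OF \<sigma>] unfolding permutes_def by auto
    then have "?L ! (\<sigma> r) \<noteq> ?L ! r" using nth_eq_iff_index_eq[of ?L] lenL r by simp
    then show ?thesis using False \<open>r < m\<close> by (auto simp: coordinate_frame_def intro!: prod_zero)
  qed (simp add: coordinate_frame_def sign_id)
  then have "wedge m (coordinate_frame I) I = (\<Sum>\<sigma> | \<sigma> permutes {..<m}. if \<sigma> = id then 1 else 0)"
    unfolding wedge_def by (intro sum.cong) auto
  also have "\<dots> = 1" using permutes_id[of "{..<m}"] finite_permutations[of "{..<m}"]
    by (simp add: sum.delta')
  finally show ?thesis .
qed

lemma wedge_coordinate_frame_other:
  assumes I: "I \<in> Idx d m" and J: "J \<in> Idx d m" and "J \<noteq> I"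
  shows "wedge m (coordinate_frame I) J = 0"
proof -
  let ?L = "sorted_list_of_set I" and ?M = "sorted_list_of_set J"
  have "finite I" "finite J" "card I = m" "card J = m"
    using I J by (auto simp: Idx_def intro: finite_subset)
  then have "\<not> J \<subseteq> I" using \<open>J \<noteq> I\<close> card_subset_eq by blast
  then obtain x where x: "x \<in> J" "x \<notin> I" by blast
  then obtain r where r: "r < m" "?M ! r = x"
    using \<open>finite J\<close> \<open>card J = m\<close> by (metis in_set_conv_nth length_sorted_list_of_set set_sorted_list_of_set)
  have "(\<Prod>r<m. coordinate_frame I (\<sigma> r) (?M ! r)) = 0" if \<sigma>: "\<sigma> permutes {..<m}" for \<sigma>
  proof -
    have "?L ! (\<sigma> r) \<in> I"
      using permutes_in_image[OF \<sigma>] r \<open>finite I\<close> \<open>card I = m\<close>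
      by (simp add: sorted_list_of_set_nth_mem)
    then have "coordinate_frame I (\<sigma> r) (?M ! r) = 0" using r x by (auto simp: coordinate_frame_def)
    then show ?thesis using r by (intro prod_zero) auto
  qed
  then show ?thesis unfolding wedge_def by (intro sum.neutral) simp
qed

lemma simple_mvec_basis:
  assumes I: "I \<in> Idx d m"
  shows "simple_mvec d m (\<lambda>J. if J = I then 1 else 0)"
  unfolding simple_mvec_def
proof (intro exI[of _ "coordinate_frame I"] conjI allI impI ballI)
  fix j x assume "j < m" "d \<le> x"
  moreover have "sorted_list_of_set I ! j \<in> I"
    using I \<open>j < m\<close> by (auto simp: Idx_def intro!: sorted_list_of_set_nth_mem intro: finite_subset)
  ultimately show "coordinate_frame I j x = 0" using I by (auto simp: coordinate_frame_def Idx_def)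
next
  fix J assume "J \<in> Idx d m"
  then show "(if J = I then 1 else 0) = wedge m (coordinate_frame I) J"
    using I wedge_coordinate_frame_self wedge_coordinate_frame_other by auto
qed

lemma mnorm_nonneg: "0 \<le> mnorm d m \<tau>"
  by (simp add: mnorm_def sum_nonneg)

lemma mnorm_scale: "mnorm d m (\<lambda>I. c * \<tau> I) = \<bar>c\<bar> * mnorm d m \<tau>"
  by (simp add: mnorm_def power_mult_distrib real_sqrt_mult flip: sum_distrib_left)

lemma abs_le_mnorm:
  assumes "I \<in> Idx d m"
  shows "\<bar>\<tau> I\<bar> \<le> mnorm d m \<tau>"
proof -
  have "(\<tau> I)\<^sup>2 \<le> (\<Sum>J\<in>Idx d m. (\<tau> J)\<^sup>2)"
    using assms by (intro member_le_sum) (simp_all add: finite_Idx)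
  then show ?thesis unfolding mnorm_def by (metis real_sqrt_abs real_sqrt_le_mono)
qed

definition decomposition_costs ::
    "ereal \<Rightarrow> nat \<Rightarrow> nat \<Rightarrow> nat \<Rightarrow> (nat \<Rightarrow> nat set \<Rightarrow> real) \<Rightarrow> real set" where
  "decomposition_costs p k d m v =
     {(\<Sum>j<l. lpnorm p k (z j) * mnorm d m (\<tau> j)) | (l::nat) z \<tau>.
        (\<forall>j<l. simple_mvec d m (\<tau> j)) \<and>
        (\<forall>i<k. \<forall>I\<in>Idx d m. v i I = (\<Sum>j<l. z j i * \<tau> j I))}"

definition decomposition_norm ::
    "ereal \<Rightarrow> nat \<Rightarrow> nat \<Rightarrow> nat \<Rightarrow> (nat \<Rightarrow> nat set \<Rightarrow> real) \<Rightarrow> real" where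
  "decomposition_norm p k d m v = Inf (decomposition_costs p k d m v)"

lemma decomposition_costsI:
  assumes "\<forall>j<(l::nat). simple_mvec d m (\<tau> j)"
    and "\<forall>i<k. \<forall>I\<in>Idx d m. v i I = (\<Sum>j<l. z j i * \<tau> j I)"
  shows "(\<Sum>j<l. lpnorm p k (z j) * mnorm d m (\<tau> j)) \<in> decomposition_costs p k d m v"
  unfolding decomposition_costs_def using assms by (intro CollectI exI[of _ l] exI[of _ z] exI[of _ \<tau>]) simp

lemma decomposition_costsE:
  assumes "a \<in> decomposition_costs p k d m v"
  obtains l z \<tau> where "a = (\<Sum>j<(l::nat). lpnorm p k (z j) * mnorm d m (\<tau> j))"
    "\<forall>j<l. simple_mvec d m (\<tau> j)" "\<forall>i<k. \<forall>I\<in>Idx d m. v i I = (\<Sum>j<l. z j i * \<tau> j I)"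
  using assms unfolding decomposition_costs_def by blast

lemma decomposition_costs_nonneg: "0 < k \<Longrightarrow> a \<in> decomposition_costs p k d m v \<Longrightarrow> 0 \<le> a"
  by (erule decomposition_costsE) (auto intro!: sum_nonneg mult_nonneg_nonneg lpnorm_nonneg mnorm_nonneg)

lemma decomposition_costs_nonempty: "decomposition_costs p k d m v \<noteq> {}"
proof -
  define S where "S = {..<k} \<times> Idx d m"
  have "finite S" by (simp add: S_def finite_Idx)
  \<comment> \<open>decompose \<open>v\<close> as the sum of the terms \<open>v i I (e\<^sub>i \<otimes> e\<^sub>I)\<close>, enumerated along \<open>h\<close>\<close>
  then obtain h where h: "bij_betw h {..<card S} S"
    using ex_bij_betw_nat_finite[of S] by (auto simp: atLeast0LessThan)
  define z where "z j i = (if i = fst (h j) then v (fst (h j)) (snd (h j)) else 0)" for j i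
  define \<tau> where "\<tau> j J = (if J = snd (h j) then 1 else 0 :: real)" for j J
  have "(\<Sum>j<card S. lpnorm p k (z j) * mnorm d m (\<tau> j)) \<in> decomposition_costs p k d m v"
  proof (rule decomposition_costsI)
    show "\<forall>j<card S. simple_mvec d m (\<tau> j)"
    proof (intro allI impI)
      fix j assume "j < card S"
      then have "h j \<in> S" using bij_betw_apply[OF h] by simp
      then show "simple_mvec d m (\<tau> j)" unfolding \<tau>_def S_def by (auto intro: simple_mvec_basis)
    qed
    show "\<forall>i<k. \<forall>I\<in>Idx d m. v i I = (\<Sum>j<card S. z j i * \<tau> j I)"
    proof (intro allI impI ballI)
      fix i I assume "i < k" "I \<in> Idx d m"
      then have "v i I = (\<Sum>s\<in>S. if s = (i, I) then v i I else 0)"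
        using \<open>finite S\<close> by (simp add: S_def)
      also have "\<dots> = (\<Sum>j<card S. if h j = (i, I) then v i I else 0)"
        using sum.reindex_bij_betw[OF h, of "\<lambda>s. if s = (i, I) then v i I else 0"] by simp
      also have "\<dots> = (\<Sum>j<card S. z j i * \<tau> j I)"
        by (intro sum.cong) (auto simp: z_def \<tau>_def prod_eq_iff)
      finally show "v i I = (\<Sum>j<card S. z j i * \<tau> j I)" .
    qed
  qed
  then show ?thesis by blast
qed

lemma decomposition_norm_le:
  "0 < k \<Longrightarrow> a \<in> decomposition_costs p k d m v \<Longrightarrow> decomposition_norm p k d m v \<le> a"
  unfolding decomposition_norm_def
  by (rule cInf_lower) (auto simp: bdd_below_def intro: decomposition_costs_nonneg)

lemma decomposition_norm_greatest:
  "(\<And>a. a \<in> decomposition_costs p k d m v \<Longrightarrow> c \<le> a) \<Longrightarrow> c \<le> decomposition_norm p k d m v"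
  unfolding decomposition_norm_def by (rule cInf_greatest[OF decomposition_costs_nonempty])

lemma decomposition_norm_nonneg: "0 < k \<Longrightarrow> 0 \<le> decomposition_norm p k d m v"
  by (rule decomposition_norm_greatest) (rule decomposition_costs_nonneg)

lemma decomposition_norm_cong:
  assumes "\<And>i I. i < k \<Longrightarrow> I \<in> Idx d m \<Longrightarrow> x i I = y i I"
  shows "decomposition_norm p k d m x = decomposition_norm p k d m y"
  using assms unfolding decomposition_norm_def decomposition_costs_def by simp

lemma decomposition_norm_zero:
  assumes "0 < k"
  shows "decomposition_norm p k d m 0 = 0"
proof -
  have "(\<Sum>j<(0::nat). lpnorm p k (z j) * mnorm d m (\<tau> j)) \<in> decomposition_costs p k d m 0" for z \<tau>
    by (rule decomposition_costsI) simp_all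
  then have "decomposition_norm p k d m 0 \<le> 0" using decomposition_norm_le[OF assms] by fastforce
  then show ?thesis using decomposition_norm_nonneg[OF assms, of p d m 0] by linarith
qed

lemma sum_lessThan_add: "(\<Sum>j<l1 + l2. f j) = (\<Sum>j<l1. f j) + (\<Sum>j<l2. f (l1 + j))"
  for f :: "nat \<Rightarrow> 'a::comm_monoid_add"
  by (induction l2) (simp_all add: add.assoc)

lemma decomposition_costs_add:
  assumes a: "a \<in> decomposition_costs p k d m x" and b: "b \<in> decomposition_costs p k d m y"
  shows "a + b \<in> decomposition_costs p k d m (x + y)"
proof -
  obtain l1 :: nat and z1 \<tau>1 where 1: "a = (\<Sum>j<l1. lpnorm p k (z1 j) * mnorm d m (\<tau>1 j))"
    "\<forall>j<l1. simple_mvec d m (\<tau>1 j)" "\<forall>i<k. \<forall>I\<in>Idx d m. x i I = (\<Sum>j<l1. z1 j i * \<tau>1 j I)"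
    using a by (rule decomposition_costsE)
  obtain l2 :: nat and z2 \<tau>2 where 2: "b = (\<Sum>j<l2. lpnorm p k (z2 j) * mnorm d m (\<tau>2 j))"
    "\<forall>j<l2. simple_mvec d m (\<tau>2 j)" "\<forall>i<k. \<forall>I\<in>Idx d m. y i I = (\<Sum>j<l2. z2 j i * \<tau>2 j I)"
    using b by (rule decomposition_costsE)
  define z where "z j = (if j < l1 then z1 j else z2 (j - l1))" for j
  define \<tau> where "\<tau> j = (if j < l1 then \<tau>1 j else \<tau>2 (j - l1))" for j
  have "(\<Sum>j<l1 + l2. lpnorm p k (z j) * mnorm d m (\<tau> j)) \<in> decomposition_costs p k d m (x + y)"
    using 1(2,3) 2(2,3) by (intro decomposition_costsI) (auto simp: sum_lessThan_add z_def \<tau>_def)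
  also have "(\<Sum>j<l1 + l2. lpnorm p k (z j) * mnorm d m (\<tau> j)) = a + b"
    using 1(1) 2(1) by (simp add: sum_lessThan_add z_def \<tau>_def)
  finally show ?thesis .
qed

lemma decomposition_norm_triangle:
  assumes "0 < k"
  shows "decomposition_norm p k d m (x + y) \<le> decomposition_norm p k d m x + decomposition_norm p k d m y"
proof -
  have "decomposition_norm p k d m (x + y) - b \<le> decomposition_norm p k d m x"
    if b: "b \<in> decomposition_costs p k d m y" for b
    using decomposition_norm_le[OF assms decomposition_costs_add[OF _ b]]
    by (intro decomposition_norm_greatest) (simp add: algebra_simps)
  then have "decomposition_norm p k d m (x + y) - decomposition_norm p k d m x \<le> decomposition_norm p k d m y"
    by (intro decomposition_norm_greatest) (simp add: algebra_simps)
  then show ?thesis by simp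
qed

lemma decomposition_costs_scale:
  assumes m: "1 \<le> m" and c: "0 \<le> c" and a: "a \<in> decomposition_costs p k d m x"
  shows "c * a \<in> decomposition_costs p k d m (c *\<^sub>R x)"
proof -
  obtain l :: nat and z \<tau> where 1: "a = (\<Sum>j<l. lpnorm p k (z j) * mnorm d m (\<tau> j))"
    "\<forall>j<l. simple_mvec d m (\<tau> j)" "\<forall>i<k. \<forall>I\<in>Idx d m. x i I = (\<Sum>j<l. z j i * \<tau> j I)"
    using a by (rule decomposition_costsE)
  have "(\<Sum>j<l. lpnorm p k (z j) * mnorm d m (\<lambda>I. c * \<tau> j I)) \<in> decomposition_costs p k d m (c *\<^sub>R x)"
    using 1(2,3) simple_mvec_scale[OF m]
    by (intro decomposition_costsI) (simp_all add: sum_distrib_left algebra_simps)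
  also have "(\<Sum>j<l. lpnorm p k (z j) * mnorm d m (\<lambda>I. c * \<tau> j I)) = c * a"
    using 1(1) c by (simp add: mnorm_scale sum_distrib_left algebra_simps)
  finally show ?thesis .
qed

lemma decomposition_norm_scale_le:
  assumes k: "0 < k" and m: "1 \<le> m" and c: "0 < c"
  shows "decomposition_norm p k d m (c *\<^sub>R x) \<le> c * decomposition_norm p k d m x"
proof -
  have "decomposition_norm p k d m (c *\<^sub>R x) / c \<le> a" if "a \<in> decomposition_costs p k d m x" for a
    using decomposition_norm_le[OF k decomposition_costs_scale[OF m less_imp_le[OF c] that]] c
    by (simp add: pos_divide_le_eq mult.commute)
  then have "decomposition_norm p k d m (c *\<^sub>R x) / c \<le> decomposition_norm p k d m x"
    by (rule decomposition_norm_greatest)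
  then show ?thesis using c by (simp add: pos_divide_le_eq mult.commute)
qed

lemma sublinear_decomposition_norm:
  assumes k: "0 < k" and m: "1 \<le> m"
  shows "sublinear (decomposition_norm p k d m)"
  unfolding sublinear_def
proof (intro conjI allI impI)
  fix x y
  show "decomposition_norm p k d m (x + y) \<le> decomposition_norm p k d m x + decomposition_norm p k d m y"
    by (rule decomposition_norm_triangle[OF k])
next
  fix c :: real and x :: "nat \<Rightarrow> nat set \<Rightarrow> real" assume "0 \<le> c"
  show "decomposition_norm p k d m (c *\<^sub>R x) = c * decomposition_norm p k d m x"
  proof (cases "c = 0")
    case True
    then show ?thesis by (simp add: decomposition_norm_zero[OF k])
  next
    case False
    with \<open>0 \<le> c\<close> have c: "0 < c" by simp
    have "decomposition_norm p k d m x = decomposition_norm p k d m ((1/c) *\<^sub>R (c *\<^sub>R x))"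
      using c by simp
    also have "\<dots> \<le> (1/c) * decomposition_norm p k d m (c *\<^sub>R x)"
      using c by (intro decomposition_norm_scale_le[OF k m]) simp
    finally show ?thesis
      using decomposition_norm_scale_le[OF k m c, of p d x] c by (simp add: field_simps)
  qed
qed

lemma decomposition_norm_simple_le:
  assumes "0 < k" and "simple_mvec d m \<tau>"
  shows "decomposition_norm p k d m (\<lambda>i I. z i * \<tau> I) \<le> lpnorm p k z * mnorm d m \<tau>"
proof -
  have "(\<Sum>j<(1::nat). lpnorm p k z * mnorm d m \<tau>) \<in> decomposition_costs p k d m (\<lambda>i I. z i * \<tau> I)"
    using assms(2) by (intro decomposition_costsI[where z = "\<lambda>_. z" and \<tau> = "\<lambda>_. \<tau>"]) simp_all
  then show ?thesis using decomposition_norm_le[OF assms(1)] by simp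
qed

lemma com_norm_set_bdd_above:
  assumes p: "1 \<le> p" and k: "0 < k"
  shows "bdd_above {lpnorm (conj_exp p) k (\<lambda>i. \<Sum>I\<in>Idx d m. w i I * \<tau> I) | \<tau>.
    simple_mvec d m \<tau> \<and> mnorm d m \<tau> \<le> 1}"
proof -
  define M where "M = (\<Sum>i<k. \<Sum>I\<in>Idx d m. \<bar>w i I\<bar>)"
  have "lpnorm (conj_exp p) k (\<lambda>i. \<Sum>I\<in>Idx d m. w i I * \<tau> I) \<le> real k * M"
    if \<tau>: "mnorm d m \<tau> \<le> 1" for \<tau>
  proof (rule lpnorm_le_card_mult[OF conj_exp_ge_1[OF p] k])
    fix i assume "i < k"
    have "\<bar>\<Sum>I\<in>Idx d m. w i I * \<tau> I\<bar> \<le> (\<Sum>I\<in>Idx d m. \<bar>w i I * \<tau> I\<bar>)"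
      by (rule sum_abs)
    also have "\<dots> \<le> (\<Sum>I\<in>Idx d m. \<bar>w i I\<bar>)"
    proof (rule sum_mono)
      fix I assume "I \<in> Idx d m"
      then have "\<bar>\<tau> I\<bar> \<le> 1" using abs_le_mnorm[of I d m \<tau>] \<tau> by linarith
      then show "\<bar>w i I * \<tau> I\<bar> \<le> \<bar>w i I\<bar>" by (simp add: abs_mult mult_left_le)
    qed
    also have "\<dots> \<le> M"
      unfolding M_def using \<open>i < k\<close> by (intro member_le_sum) (auto intro: sum_nonneg)
    finally show "\<bar>\<Sum>I\<in>Idx d m. w i I * \<tau> I\<bar> \<le> M" .
  qed
  then show ?thesis unfolding bdd_above_def by blast
qed

lemma lpnorm_le_com_norm:
  assumes "1 \<le> p" and "0 < k" and "simple_mvec d m \<tau>" and "mnorm d m \<tau> \<le> 1"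
  shows "lpnorm (conj_exp p) k (\<lambda>i. \<Sum>I\<in>Idx d m. w i I * \<tau> I) \<le> com_norm p k d m w"
  unfolding com_norm_def
  by (rule cSup_upper[OF _ com_norm_set_bdd_above[OF assms(1,2)]]) (use assms(3,4) in blast)

lemma covector_simple_le:
  assumes p: "1 \<le> p" and k: "0 < k" and m: "1 \<le> m" and w: "com_norm p k d m w \<le> 1"
    and \<tau>: "simple_mvec d m \<tau>"
  shows "(\<Sum>i<k. z i * (\<Sum>I\<in>Idx d m. w i I * \<tau> I)) \<le> lpnorm p k z * mnorm d m \<tau>"
proof (cases "mnorm d m \<tau> = 0")
  case True
  then have "\<tau> I = 0" if "I \<in> Idx d m" for I using abs_le_mnorm[OF that, of \<tau>] by simp
  then show ?thesis using True by simp
next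
  case False
  define \<mu> where "\<mu> = mnorm d m \<tau>"
  have \<mu>: "0 < \<mu>" using False mnorm_nonneg[of d m \<tau>] by (simp add: \<mu>_def)
  define \<tau>' where "\<tau>' = (\<lambda>I. (1 / \<mu>) * \<tau> I)"
  have \<tau>': "simple_mvec d m \<tau>'" "mnorm d m \<tau>' \<le> 1"
    unfolding \<tau>'_def using simple_mvec_scale[OF m \<tau>] \<mu> by (simp_all only: mnorm_scale) (simp add: \<mu>_def)
  have "(\<Sum>i<k. z i * (\<Sum>I\<in>Idx d m. w i I * \<tau> I))
      = \<mu> * (\<Sum>i<k. z i * (\<Sum>I\<in>Idx d m. w i I * \<tau>' I))"
    using \<mu> by (simp add: \<tau>'_def sum_distrib_left algebra_simps)
  also have "\<dots> \<le> \<mu> * (lpnorm p k z * lpnorm (conj_exp p) k (\<lambda>i. \<Sum>I\<in>Idx d m. w i I * \<tau>' I))"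
    using \<mu> lpnorm_Holder[OF p] by (intro mult_left_mono) simp_all
  also have "\<dots> \<le> \<mu> * lpnorm p k z"
    using \<mu> lpnorm_le_com_norm[OF p k \<tau>', of w] w lpnorm_nonneg[OF k, of p z]
    by (intro mult_left_mono mult_left_le) simp_all
  finally show ?thesis by (simp add: \<mu>_def mult.commute)
qed

lemma pairing_le_decomposition_norm:
  assumes p: "1 \<le> p" and k: "0 < k" and m: "1 \<le> m" and w: "com_norm p k d m w \<le> 1"
  shows "pairing k d m w x \<le> decomposition_norm p k d m x"
proof (rule decomposition_norm_greatest)
  fix a assume "a \<in> decomposition_costs p k d m x"
  then obtain l :: nat and z \<tau> where a: "a = (\<Sum>j<l. lpnorm p k (z j) * mnorm d m (\<tau> j))"
    and \<tau>: "\<forall>j<l. simple_mvec d m (\<tau> j)" and x: "\<forall>i<k. \<forall>I\<in>Idx d m. x i I = (\<Sum>j<l. z j i * \<tau> j I)"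
    by (rule decomposition_costsE)
  have "pairing k d m w x = (\<Sum>i<k. \<Sum>I\<in>Idx d m. \<Sum>j<l. z j i * (w i I * \<tau> j I))"
    unfolding pairing_def using x by (simp add: sum_distrib_left algebra_simps)
  also have "\<dots> = (\<Sum>j<l. \<Sum>i<k. z j i * (\<Sum>I\<in>Idx d m. w i I * \<tau> j I))"
    by (subst sum.swap, subst (2) sum.swap) (simp add: sum_distrib_left)
  also have "\<dots> \<le> a"
    unfolding a using \<tau> by (intro sum_mono covector_simple_le[OF p k m w]) simp
  finally show "pairing k d m w x \<le> a" .
qed

lemma com_norm_le_1I:
  assumes p: "1 \<le> p" and k: "0 < k" and m: "1 \<le> m"
    and w: "\<And>x. pairing k d m w x \<le> decomposition_norm p k d m x"
  shows "com_norm p k d m w \<le> 1"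
  unfolding com_norm_def
proof (rule cSup_least)
  show "{lpnorm (conj_exp p) k (\<lambda>i. \<Sum>I\<in>Idx d m. w i I * \<tau> I) |\<tau>.
      simple_mvec d m \<tau> \<and> mnorm d m \<tau> \<le> 1} \<noteq> {}"
    using simple_mvec_zero[OF m, of d] by (auto simp: mnorm_def)
next
  fix a assume "a \<in> {lpnorm (conj_exp p) k (\<lambda>i. \<Sum>I\<in>Idx d m. w i I * \<tau> I) |\<tau>.
      simple_mvec d m \<tau> \<and> mnorm d m \<tau> \<le> 1}"
  then obtain \<tau> where a: "a = lpnorm (conj_exp p) k (\<lambda>i. \<Sum>I\<in>Idx d m. w i I * \<tau> I)"
    and \<tau>: "simple_mvec d m \<tau>" "mnorm d m \<tau> \<le> 1" by blast
  show "a \<le> 1" unfolding a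
  proof (rule lpnorm_conj_le_1[OF p k])
    fix z :: "nat \<Rightarrow> real"
    have "(\<Sum>i<k. z i * (\<Sum>I\<in>Idx d m. w i I * \<tau> I)) = pairing k d m w (\<lambda>i I. z i * \<tau> I)"
      by (simp add: pairing_def sum_distrib_left algebra_simps)
    also have "\<dots> \<le> lpnorm p k z * mnorm d m \<tau>"
      using w order.trans decomposition_norm_simple_le[OF k \<tau>(1)] by blast
    also have "\<dots> \<le> lpnorm p k z"
      using \<tau>(2) lpnorm_nonneg[OF k] mnorm_nonneg by (simp add: mult_left_le)
    finally show "(\<Sum>i<k. z i * (\<Sum>I\<in>Idx d m. w i I * \<tau> I)) \<le> lpnorm p k z" .
  qed
qed

lemma com_norm_le_1_iff:
  assumes "1 \<le> p" and "0 < k" and "1 \<le> m"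
  shows "com_norm p k d m w \<le> 1 \<longleftrightarrow> (\<forall>x. pairing k d m w x \<le> decomposition_norm p k d m x)"
  using pairing_le_decomposition_norm[OF assms] com_norm_le_1I[OF assms] by blast

definition basis_mvec :: "nat \<Rightarrow> nat set \<Rightarrow> nat \<Rightarrow> nat set \<Rightarrow> real" where
  "basis_mvec i I = (\<lambda>i' I'. if i' = i \<and> I' = I then 1 else 0)"

text \<open>The carrier \<^typ>\<open>nat \<Rightarrow> nat set \<Rightarrow> real\<close> is infinite-dimensional, but none of the norms
  reads the coordinates outside \<open>i < k\<close>, \<open>I \<in> Idx d m\<close>; zeroing them moves every vector into
  the finite-dimensional span of the basis, where Hahn-Banach applies.\<close>

definition restrict_mvec :: "nat \<Rightarrow> nat \<Rightarrow> nat \<Rightarrow> (nat \<Rightarrow> nat set \<Rightarrow> real) \<Rightarrow> nat \<Rightarrow> nat set \<Rightarrow> real" where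
  "restrict_mvec k d m x = (\<Sum>i<k. \<Sum>I\<in>Idx d m. x i I *\<^sub>R basis_mvec i I)"

lemma restrict_mvec_apply:
  assumes "i < k" and "I \<in> Idx d m"
  shows "restrict_mvec k d m x i I = x i I"
proof -
  have "restrict_mvec k d m x i I = (\<Sum>i'<k. if i' = i then x i I else 0)"
    unfolding restrict_mvec_def sum_fun_apply
    by (intro sum.cong) (auto simp: basis_mvec_def if_distrib finite_Idx assms(2) cong: if_cong)
  also have "\<dots> = x i I" using assms(1) by simp
  finally show ?thesis .
qed

lemma restrict_mvec_in_span:
  "restrict_mvec k d m x \<in> span ((\<lambda>(i, I). basis_mvec i I) ` ({..<k} \<times> Idx d m))"
  unfolding restrict_mvec_def by (intro span_sum span_scale span_base) auto

lemma norming_covector_exists: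
  assumes k: "0 < k" and m: "1 \<le> m"
  shows "\<exists>w. (\<forall>x. pairing k d m w x \<le> decomposition_norm p k d m x)
    \<and> pairing k d m w v = decomposition_norm p k d m v"
proof -
  let ?N = "decomposition_norm p k d m"
  let ?E = "(\<lambda>(i, I). basis_mvec i I) ` ({..<k} \<times> Idx d m)"
  have N_restrict: "?N (restrict_mvec k d m x) = ?N x" for x
    by (rule decomposition_norm_cong) (simp add: restrict_mvec_apply)
  have E: "finite ?E" by (simp add: finite_Idx)
  obtain g where g: "linear_on (span ?E) g" "g (restrict_mvec k d m v) = ?N (restrict_mvec k d m v)"
    "\<forall>x\<in>span ?E. g x \<le> ?N x"
    using Hahn_Banach_norming[OF sublinear_decomposition_norm[OF k m] E restrict_mvec_in_span] by blast
  define w where "w i I = g (basis_mvec i I)" for i I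
  have pairing_eq: "pairing k d m w x = g (restrict_mvec k d m x)" for x
  proof -
    have basis: "basis_mvec i I \<in> span ?E" if "i < k" "I \<in> Idx d m" for i I
      using that by (intro span_base) auto
    have "g (restrict_mvec k d m x) = (\<Sum>i<k. g (\<Sum>I\<in>Idx d m. x i I *\<^sub>R basis_mvec i I))"
      unfolding restrict_mvec_def using basis
      by (intro linear_on_sum[OF g(1) subspace_span]) (auto intro: span_sum span_scale)
    also have "\<dots> = (\<Sum>i<k. \<Sum>I\<in>Idx d m. g (x i I *\<^sub>R basis_mvec i I))"
      using basis by (intro sum.cong refl linear_on_sum[OF g(1) subspace_span]) (auto intro: span_scale)
    also have "\<dots> = pairing k d m w x"
      using g(1) basis by (simp add: pairing_def w_def linear_on_def mult.commute)
    finally show ?thesis ..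
  qed
  have "pairing k d m w x \<le> ?N x" for x
    using bspec[OF g(3) restrict_mvec_in_span[of k d m x]] unfolding pairing_eq N_restrict .
  moreover have "pairing k d m w v = ?N v" using g(2) unfolding pairing_eq N_restrict .
  ultimately show ?thesis by blast
qed

theorem lemmaA2:
  fixes k d m :: nat and p :: ereal and v :: "nat \<Rightarrow> nat set \<Rightarrow> real"
  assumes "1 \<le> k" and "1 \<le> m" and "m \<le> d" and "1 \<le> p"
  shows "mass_norm p k d m v =
    Inf {(\<Sum>j<l. lpnorm p k (z j) * mnorm d m (\<tau> j)) | (l::nat) z \<tau>.
           (\<forall>j<l. simple_mvec d m (\<tau> j)) \<and>
           (\<forall>i<k. \<forall>I\<in>Idx d m. v i I = (\<Sum>j<l. z j i * \<tau> j I))}"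
proof -
  have k: "0 < k" using assms(1) by simp
  obtain w0 where w0: "\<forall>x. pairing k d m w0 x \<le> decomposition_norm p k d m x"
    "pairing k d m w0 v = decomposition_norm p k d m v"
    using norming_covector_exists[OF k assms(2)] by blast
  have "mass_norm p k d m v = decomposition_norm p k d m v"
    unfolding mass_norm_def com_norm_le_1_iff[OF assms(4) k assms(2)]
  proof (rule cSup_eq_maximum)
    show "decomposition_norm p k d m v \<in>
        {pairing k d m w v |w. \<forall>x. pairing k d m w x \<le> decomposition_norm p k d m x}"
      using w0 by (intro CollectI exI[of _ w0]) simp
  qed auto
  then show ?thesis by (simp add: decomposition_norm_def decomposition_costs_def)
qed

end
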